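(* Let $T$ be a well-formed trace satisfying the initial-write property, let $e$ be a read and $f$ a write of $T$ that are conflicting, and suppose there is a correctly reordered prefix of $T$ in which $e$ appears immediately before $f$. Then there is no correctly reordered prefix of $T$ in which $f$ appears immediately before $e$.
   Context: Traces. A trace $T$ is a finite sequence of pairwise distinct events. Each event $e$ belongs to a thread $\mathrm{tid}(e)$ and is one of: a read $r(x)$ or write $w(x)$ of a shared variable $x$, or an acquire $acq(y)$ or release $rel(y)$ of a lock $y$. The projection of $T$ onto thread $i$ is the subsequence of events of thread $i$. $T$ is well-formed if a thread only acquires a lock not currently held and every release $rel(y)$ in thread $i$ has a matching earlier acquire $acq(y)$ in thread $i$ with no other acquire on $y$ in between. Two events are conflicting if they are reads/writes on the same variable, at least one is a write, and they belong to different threads. For a read $e$ on $x$, a write $f$ on $x$ is the last write of $e$ w.r.t. $T$ if $f$ precedes $e$ in $T$ and no other write on $x$ lies strictly between them. $T$ satisfies the initial-write property if every read on $x$ is preceded in $T$ by some write on $x$. Correct reordering. $T'$ is a correctly reordered prefix of $T$ if $T'$ is a sequence of some of the events of $T$ such that: (i) for every thread $i$, the projection of $T'$ onto $i$ is a prefix of the projection of $T$ onto $i$; (ii) for every read $e$ in $T'$ whose last write w.r.t. $T$ is $f$, $f$ is in $T'$ and is also the last write of $e$ w.r.t. $T'$; (iii) for any two acquires $e_1,e_2$ on the same lock with $e_1$ before $e_2$ in $T'$, the matching release of $e_1$ is in $T'$ and lies strictly between $e_1$ and $e_2$. *)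

theory Defs
  imports Main "HOL-Library.Sublist"
begin

datatype ('v, 'l) action = Rd 'v | Wr 'v | Acq 'l | Rel 'l

text \<open>An event carries an identifier (so that events with the same thread and
operation can still be distinct), a thread id, and an action.\<close>
datatype ('v, 'l) event = Ev (eid: nat) (tid: nat) (act: "('v, 'l) action")

type_synonym ('v, 'l) trace = "('v, 'l) event list"

definition is_read :: "'v \<Rightarrow> ('v,'l) event \<Rightarrow> bool" where
  "is_read x e \<longleftrightarrow> act e = Rd x"
definition is_write :: "'v \<Rightarrow> ('v,'l) event \<Rightarrow> bool" where
  "is_write x e \<longleftrightarrow> act e = Wr x"
definition is_acq :: "'l \<Rightarrow> ('v,'l) event \<Rightarrow> bool" where
  "is_acq y e \<longleftrightarrow> act e = Acq y"
definition is_rel :: "'l \<Rightarrow> ('v,'l) event \<Rightarrow> bool" where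
  "is_rel y e \<longleftrightarrow> act e = Rel y"

definition is_any_read :: "('v,'l) event \<Rightarrow> bool" where
  "is_any_read e \<longleftrightarrow> (\<exists>x. is_read x e)"
definition is_any_write :: "('v,'l) event \<Rightarrow> bool" where
  "is_any_write e \<longleftrightarrow> (\<exists>x. is_write x e)"

definition before :: "('v,'l) trace \<Rightarrow> ('v,'l) event \<Rightarrow> ('v,'l) event \<Rightarrow> bool" where
  "before T a b \<longleftrightarrow> (\<exists>i j. i < j \<and> j < length T \<and> T ! i = a \<and> T ! j = b)"

definition held :: "('v,'l) trace \<Rightarrow> nat \<Rightarrow> 'l \<Rightarrow> bool" where
  "held T k y \<longleftrightarrow> (\<exists>j<k. is_acq y (T ! j) \<and>
      \<not> (\<exists>m. j < m \<and> m < k \<and> is_rel y (T ! m) \<and> tid (T ! m) = tid (T ! j)))"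

definition well_formed :: "('v,'l) trace \<Rightarrow> bool" where
  "well_formed T \<longleftrightarrow>
    (\<forall>k < length T. \<forall>y. is_acq y (T ! k) \<longrightarrow> \<not> held T k y) \<and>
    (\<forall>k < length T. \<forall>y. is_rel y (T ! k) \<longrightarrow>
        (\<exists>j<k. is_acq y (T ! j) \<and> tid (T ! j) = tid (T ! k) \<and>
            \<not> (\<exists>m. j < m \<and> m < k \<and> is_acq y (T ! m))))"

definition conflicting :: "('v,'l) event \<Rightarrow> ('v,'l) event \<Rightarrow> bool" where
  "conflicting a b \<longleftrightarrow> tid a \<noteq> tid b \<and>
     (\<exists>x. (is_read x a \<or> is_write x a) \<and> (is_read x b \<or> is_write x b) \<and>
          (is_write x a \<or> is_write x b))"

definition last_write :: "('v,'l) trace \<Rightarrow> ('v,'l) event \<Rightarrow> ('v,'l) event \<Rightarrow> bool" where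
  "last_write L e f \<longleftrightarrow> (\<exists>x. is_read x e \<and> is_write x f \<and>
     (\<exists>i j. i < j \<and> j < length L \<and> L ! i = f \<and> L ! j = e \<and>
        \<not> (\<exists>m. i < m \<and> m < j \<and> is_write x (L ! m))))"

definition initial_write :: "('v,'l) trace \<Rightarrow> bool" where
  "initial_write T \<longleftrightarrow> (\<forall>j < length T. \<forall>x. is_read x (T ! j) \<longrightarrow>
     (\<exists>i<j. is_write x (T ! i)))"

definition proj :: "('v,'l) trace \<Rightarrow> nat \<Rightarrow> ('v,'l) trace" where
  "proj T i = filter (\<lambda>e. tid e = i) T"

definition matching_rel :: "('v,'l) trace \<Rightarrow> ('v,'l) event \<Rightarrow> ('v,'l) event \<Rightarrow> bool" where
  "matching_rel T a r \<longleftrightarrow> (\<exists>y. is_acq y a \<and> is_rel y r \<and> tid a = tid r \<and>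
     (\<exists>i j. i < j \<and> j < length T \<and> T ! i = a \<and> T ! j = r \<and>
        \<not> (\<exists>m. i < m \<and> m < j \<and> (is_acq y (T ! m) \<or> is_rel y (T ! m)))))"

definition correct_reordered_prefix :: "('v,'l) trace \<Rightarrow> ('v,'l) trace \<Rightarrow> bool" where
  "correct_reordered_prefix T' T \<longleftrightarrow>
     distinct T' \<and> set T' \<subseteq> set T \<and>
     (\<forall>i. prefix (proj T' i) (proj T i)) \<and>
     (\<forall>e \<in> set T'. \<forall>f. last_write T e f \<longrightarrow> f \<in> set T' \<and> last_write T' e f) \<and>
     (\<forall>e1 e2 y. is_acq y e1 \<and> is_acq y e2 \<and> before T' e1 e2 \<longrightarrow>
        (\<exists>r. matching_rel T e1 r \<and> r \<in> set T' \<and> before T' e1 r \<and> before T' r e2))"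

definition imm_before :: "('v,'l) trace \<Rightarrow> ('v,'l) event \<Rightarrow> ('v,'l) event \<Rightarrow> bool" where
  "imm_before L a b \<longleftrightarrow> (\<exists>i. Suc i < length L \<and> L ! i = a \<and> L ! Suc i = b)"

end

theory Submission
  imports Defs
begin

text \<open>By the initial-write property the read e has a last write g in T, and
condition (ii) makes g the last write of e in every correctly reordered prefix
containing e. In a prefix where f immediately precedes e, the write f on the same
variable is the last write of e, so g = f; hence f precedes e in every such prefix,
and e cannot immediately precede f.\<close>

lemma initial_write_last_write_exists:
  assumes "initial_write T" "e \<in> set T" "is_read x e"
  shows "\<exists>g. last_write T e g"
proof -
  obtain j where j: "j < length T" "T ! j = e" using assms(2) by (metis in_set_conv_nth)
  define S where "S = {i. i < j \<and> is_write x (T ! i)}"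
  have "\<exists>i<j. is_write x (T ! i)"
    using assms(1,3) j unfolding initial_write_def by auto
  then have "S \<noteq> {}" by (auto simp: S_def)
  moreover have fin: "finite S" by (simp add: S_def)
  ultimately have "Max S \<in> S" by (rule Max_in[rotated])
  then have i: "Max S < j" "is_write x (T ! Max S)" by (simp_all add: S_def)
  have "\<not> (\<exists>m. Max S < m \<and> m < j \<and> is_write x (T ! m))"
  proof
    assume "\<exists>m. Max S < m \<and> m < j \<and> is_write x (T ! m)"
    then obtain m where "Max S < m" "m \<in> S" unfolding S_def by blast
    then show False using Max_ge[OF fin] by fastforce
  qed
  then have "last_write T e (T ! Max S)"
    unfolding last_write_def using i j assms(3) by blast
  then show ?thesis ..
qed

lemma imm_before_set:
  assumes "imm_before L a b"
  shows "a \<in> set L" "b \<in> set L"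
  using assms unfolding imm_before_def by (auto dest: Suc_lessD)

lemma last_write_before:
  assumes "last_write L e g"
  shows "before L g e"
  using assms unfolding last_write_def before_def by blast

lemma imm_before_not_before:
  assumes "distinct L" "imm_before L a b"
  shows "\<not> before L b a"
proof
  assume "before L b a"
  then obtain i j where ij: "i < j" "j < length L" "L ! i = b" "L ! j = a"
    unfolding before_def by blast
  obtain k where k: "Suc k < length L" "L ! k = a" "L ! Suc k = b"
    using assms(2) unfolding imm_before_def by blast
  have "j = k" using nth_eq_iff_index_eq[OF assms(1) ij(2), of k] ij(4) k by simp
  moreover have "i = Suc k"
    using nth_eq_iff_index_eq[OF assms(1) _ k(1), of i] ij k(3) by simp
  ultimately show False using ij by simp
qed

lemma last_write_imm_before:
  assumes "distinct L" "imm_before L f e" "is_write x f" "is_read x e"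
    and "last_write L e g"
  shows "g = f"
proof -
  obtain y a b where ab: "is_read y e" "is_write y g" "a < b" "b < length L"
      "L ! a = g" "L ! b = e" "\<not> (\<exists>m. a < m \<and> m < b \<and> is_write y (L ! m))"
    using assms(5) unfolding last_write_def by blast
  obtain k where k: "Suc k < length L" "L ! k = f" "L ! Suc k = e"
    using assms(2) unfolding imm_before_def by blast
  have "y = x" using ab(1) assms(4) by (simp add: is_read_def)
  have "b = Suc k" using assms(1) ab(4,6) k by (metis nth_eq_iff_index_eq)
  then have "\<not> a < k" using ab(7) k(2) assms(3) \<open>y = x\<close> by auto
  with ab(3) \<open>b = Suc k\<close> have "a = k" by simp
  then show ?thesis using ab(5) k(2) by simp
qed

lemma correct_reordered_prefix_last_write:
  assumes "correct_reordered_prefix T' T" "e \<in> set T'" "last_write T e g"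
  shows "last_write T' e g"
  using assms unfolding correct_reordered_prefix_def by blast

lemma correct_reordered_prefix_distinct:
  "correct_reordered_prefix T' T \<Longrightarrow> distinct T'"
  by (simp add: correct_reordered_prefix_def)

theorem mainTheorem11:
  fixes T :: "('v, 'l) trace" and e f :: "('v, 'l) event"
  assumes "distinct T"
    and "well_formed T"
    and "initial_write T"
    and "e \<in> set T" and "f \<in> set T"
    and "is_any_read e" and "is_any_write f"
    and "conflicting e f"
    and "\<exists>T1. correct_reordered_prefix T1 T \<and> imm_before T1 e f"
  shows "\<not> (\<exists>T2. correct_reordered_prefix T2 T \<and> imm_before T2 f e)"
proof
  assume "\<exists>T2. correct_reordered_prefix T2 T \<and> imm_before T2 f e"
  then obtain T2 where T2: "correct_reordered_prefix T2 T" "imm_before T2 f e" by blast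
  obtain T1 where T1: "correct_reordered_prefix T1 T" "imm_before T1 e f" using assms(9) by blast
  obtain x where x: "is_read x e" "is_write x f"
    using assms(6-8) unfolding is_any_read_def is_any_write_def conflicting_def
      is_read_def is_write_def by auto
  obtain g where g: "last_write T e g"
    using initial_write_last_write_exists[OF assms(3,4) x(1)] by blast
  have "g = f"
    using last_write_imm_before[OF correct_reordered_prefix_distinct[OF T2(1)] T2(2) x(2,1)]
      correct_reordered_prefix_last_write[OF T2(1) imm_before_set(2)[OF T2(2)] g] by blast
  then have "before T1 f e"
    using last_write_before correct_reordered_prefix_last_write[OF T1(1) imm_before_set(1)[OF T1(2)] g]
    by blast
  then show False
    using imm_before_not_before[OF correct_reordered_prefix_distinct[OF T1(1)] T1(2)] by blast
qed

end
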